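(* Let $N$ be a finite index set and let $\{y_k\}_{k\ge0}$ be a (possibly random) sequence of vectors in $\mathbb{R}^N$ whose entries satisfy, for all $k$ and $n\in N$, $$y_{k+1}(n)\ge(1-\beta_k(n))\,y_k(n)+\beta_k(n)\big(\gamma\min_{m\in N}y_k(m)-e_k(n)\big),$$ where $\gamma\in(0,1)$, the step sizes $\beta_k(n)\in[0,1]$ decay to zero with $\sum_{k=0}^\infty\beta_k(n)=\infty$, and the errors satisfy $e_k(n)\to c$ as $k\to\infty$ almost surely for each $n$, for some $c\ge0$. Suppose $y_k(n)\ge-M$ for some $M\ge0$ for all $k$ and $n$. Then $$\liminf_{k\to\infty}y_k(n)\ge-\frac{c}{1-\gamma}$$ almost surely for each $n$. *)

theory Defs
  imports "HOL-Probability.Probability"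
begin

end

theory Submission
  imports Defs
begin

(* The argument is pathwise. If eventually all entries are at least t, each entry obeys a
   relaxation y(k+1) >= (1 - beta k) y k + beta k T towards T = gamma t - c - epsilon, and since
   the product of the factors 1 - beta j is at most exp (- sum of beta j), which tends to 0, the
   entry eventually exceeds T - epsilon. Hence the set of eventual uniform lower bounds contains
   -B and is closed under t |-> gamma t - c - epsilon, so its supremum cannot lie below the fixed
   point -c/(1 - gamma) of this contraction. *)

lemma not_summable_tail_sums_at_top:
  fixes b :: "nat \<Rightarrow> real"
  assumes nonneg: "\<And>k. 0 \<le> b k" and "\<not> summable b"
  shows "filterlim (\<lambda>k. \<Sum>j\<in>{K..<k}. b j) at_top sequentially"
  unfolding filterlim_at_top
proof
  fix R
  obtain k0 where k0: "R + (\<Sum>j<K. b j) < (\<Sum>j<k0. b j)"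
    using summableI_nonneg_bounded[of b "R + (\<Sum>j<K. b j)"] assms by (meson not_le)
  show "eventually (\<lambda>k. R \<le> (\<Sum>j\<in>{K..<k}. b j)) sequentially"
  proof (rule eventually_sequentiallyI[of "max k0 K"])
    fix k assume k: "max k0 K \<le> k"
    have "(\<Sum>j<k0. b j) \<le> (\<Sum>j<k. b j)"
      using k nonneg by (intro sum_mono2) auto
    also have "\<dots> = (\<Sum>j<K. b j) + (\<Sum>j\<in>{K..<k}. b j)"
      using sum.atLeastLessThan_concat[of 0 K k b] k by (simp add: atLeast0LessThan)
    finally show "R \<le> (\<Sum>j\<in>{K..<k}. b j)" using k0 by linarith
  qed
qed

lemma nonpos_contraction_exp_lower_bound:
  fixes b z :: "nat \<Rightarrow> real"
  assumes contr: "\<And>k. K \<le> k \<Longrightarrow> (1 - b k) * z k \<le> z (Suc k)"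
    and "\<And>k. 0 \<le> b k" and "\<And>k. b k \<le> 1" and "z K \<le> 0" and "K \<le> k"
  shows "z K * exp (- (\<Sum>j\<in>{K..<k}. b j)) \<le> z k"
  using \<open>K \<le> k\<close>
proof (induction k rule: dec_induct)
  case base
  then show ?case by simp
next
  case (step k)
  let ?w = "z K * exp (- (\<Sum>j\<in>{K..<k}. b j))"
  have "?w \<le> 0" using \<open>z K \<le> 0\<close> by (simp add: mult_nonpos_nonneg)
  have "z K * exp (- (\<Sum>j\<in>{K..<Suc k}. b j)) = exp (- b k) * ?w"
    using step by (simp add: exp_add[symmetric] algebra_simps)
  also have "\<dots> \<le> (1 - b k) * ?w"
    using \<open>?w \<le> 0\<close> exp_ge_add_one_self[of "- b k"] by (intro mult_right_mono_neg) auto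
  also have "\<dots> \<le> (1 - b k) * z k"
    using step.IH assms(3)[of k] by (intro mult_left_mono) auto
  also have "\<dots> \<le> z (Suc k)" using contr step by auto
  finally show ?case .
qed

lemma nonpos_contraction_tendsto_zero:
  fixes b z :: "nat \<Rightarrow> real"
  assumes "\<And>k. K \<le> k \<Longrightarrow> (1 - b k) * z k \<le> z (Suc k)"
    and "\<And>k. 0 \<le> b k" and "\<And>k. b k \<le> 1" and "\<not> summable b" and "\<And>k. z k \<le> 0"
  shows "z \<longlonglongrightarrow> 0"
proof (rule tendsto_sandwich)
  have "filterlim (\<lambda>k. - (\<Sum>j\<in>{K..<k}. b j)) at_bot sequentially"
    using not_summable_tail_sums_at_top[of b K] assms(2,4) by (simp add: filterlim_uminus_at_bot)
  then have "(\<lambda>k. z K * exp (- (\<Sum>j\<in>{K..<k}. b j))) \<longlonglongrightarrow> z K * 0"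
    by (intro tendsto_mult tendsto_const filterlim_compose[OF exp_at_bot])
  then show "(\<lambda>k. z K * exp (- (\<Sum>j\<in>{K..<k}. b j))) \<longlonglongrightarrow> 0" by simp
  show "eventually (\<lambda>k. z K * exp (- (\<Sum>j\<in>{K..<k}. b j)) \<le> z k) sequentially"
    using eventually_ge_at_top[of K]
    by eventually_elim (use assms nonpos_contraction_exp_lower_bound[of K b z] in auto)
qed (use assms(5) in auto)

lemma relaxation_eventually_ge:
  fixes b y :: "nat \<Rightarrow> real"
  assumes step: "\<And>k. K \<le> k \<Longrightarrow> (1 - b k) * y k + b k * T \<le> y (Suc k)"
    and "\<And>k. 0 \<le> b k" and "\<And>k. b k \<le> 1" and "\<not> summable b" and "0 < \<delta>"
  shows "eventually (\<lambda>k. T - \<delta> \<le> y k) sequentially"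
proof -
  define z where "z k = min (y k - T) 0" for k
  have "(1 - b k) * z k \<le> z (Suc k)" if "K \<le> k" for k
  proof -
    have "0 \<le> 1 - b k" using assms(3)[of k] by simp
    then have "(1 - b k) * z k \<le> (1 - b k) * (y k - T)" and "(1 - b k) * z k \<le> 0"
      by (auto simp: z_def intro: mult_left_mono mult_nonneg_nonpos)
    moreover have "(1 - b k) * (y k - T) \<le> y (Suc k) - T"
      using step[OF that] by (simp add: algebra_simps)
    ultimately show ?thesis by (simp add: z_def)
  qed
  then have "z \<longlonglongrightarrow> 0"
    using assms(2-4) by (intro nonpos_contraction_tendsto_zero) (auto simp: z_def)
  then have "eventually (\<lambda>k. - \<delta> < z k) sequentially"
    using \<open>0 < \<delta>\<close> by (intro order_tendstoD(1)) auto
  then show ?thesis by eventually_elim (simp add: z_def)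
qed

lemma downward_closed_contains_below_fixed_point:
  fixes S :: "real set"
  assumes "0 \<le> \<gamma>" and "\<gamma> < 1" and "s0 \<in> S"
    and down: "\<And>s t. s \<in> S \<Longrightarrow> t \<le> s \<Longrightarrow> t \<in> S"
    and improve: "\<And>s \<epsilon>. s \<in> S \<Longrightarrow> 0 < \<epsilon> \<Longrightarrow> \<gamma> * s - c - \<epsilon> \<in> S"
    and "t < - c / (1 - \<gamma>)"
  shows "t \<in> S"
proof (rule ccontr)
  assume "t \<notin> S"
  then have ub: "s \<le> t" if "s \<in> S" for s
    using down[OF that, of t] by force
  then have bdd: "bdd_above S" by (auto simp: bdd_above_def)
  define a where "a = Sup S"
  have "a \<le> t" unfolding a_def using \<open>s0 \<in> S\<close> ub by (intro cSup_least) auto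
  with \<open>t < - c / (1 - \<gamma>)\<close> have "a < - c / (1 - \<gamma>)" by linarith
  with \<open>\<gamma> < 1\<close> have "a * (1 - \<gamma>) < - c" by (subst (asm) pos_less_divide_eq) auto
  define \<epsilon> where "\<epsilon> = (\<gamma> * a - c - a) / 2"
  have "0 < \<epsilon>" using \<open>a * (1 - \<gamma>) < - c\<close> by (simp add: \<epsilon>_def algebra_simps)
  then obtain s where "s \<in> S" and "a - \<epsilon> < s"
    using less_cSup_iff[of S "a - \<epsilon>"] \<open>s0 \<in> S\<close> bdd by (auto simp: a_def)
  have "\<gamma> * s - c - \<epsilon> \<le> a"
    unfolding a_def using improve[OF \<open>s \<in> S\<close> \<open>0 < \<epsilon>\<close>] bdd by (intro cSup_upper)
  moreover have "\<gamma> * a - \<gamma> * \<epsilon> \<le> \<gamma> * s"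
    using \<open>a - \<epsilon> < s\<close> \<open>0 \<le> \<gamma>\<close> mult_left_mono[of "a - \<epsilon>" s \<gamma>]
    by (simp add: right_diff_distrib)
  moreover have "\<gamma> * \<epsilon> < \<epsilon>" using \<open>0 < \<epsilon>\<close> \<open>\<gamma> < 1\<close> by simp
  moreover have "2 * \<epsilon> = \<gamma> * a - c - a" by (simp add: \<epsilon>_def)
  ultimately show False by linarith
qed

lemma ereal_le_liminf_if_eventually_ge:
  fixes f :: "nat \<Rightarrow> real"
  assumes "\<And>t. t < L \<Longrightarrow> eventually (\<lambda>k. t \<le> f k) sequentially"
  shows "ereal L \<le> liminf (\<lambda>k. ereal (f k))"
  unfolding le_Liminf_iff
proof (intro allI impI)
  fix u :: ereal
  assume "u < ereal L"
  then obtain t where "u < ereal t" and "t < L" using ereal_dense2 by force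
  from assms[OF \<open>t < L\<close>] show "eventually (\<lambda>k. u < ereal (f k)) sequentially"
    by eventually_elim (use \<open>u < ereal t\<close> in \<open>auto intro: less_le_trans\<close>)
qed

lemma eventual_lower_bound_improves:
  fixes Y \<beta> e :: "nat \<Rightarrow> 'n::finite \<Rightarrow> real"
  assumes rec: "\<And>k n. (1 - \<beta> k n) * Y k n + \<beta> k n * (\<gamma> * Min (range (Y k)) - e k n) \<le> Y (Suc k) n"
    and "\<And>k n. 0 \<le> \<beta> k n" and "\<And>k n. \<beta> k n \<le> 1" and "\<And>n. \<not> summable (\<lambda>k. \<beta> k n)"
    and "\<And>n. (\<lambda>k. e k n) \<longlonglongrightarrow> c" and "0 \<le> \<gamma>"
    and "eventually (\<lambda>k. \<forall>n. t \<le> Y k n) sequentially" and "0 < \<epsilon>"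
  shows "eventually (\<lambda>k. \<forall>n. \<gamma> * t - c - \<epsilon> \<le> Y k n) sequentially"
proof -
  have "eventually (\<lambda>k. \<forall>n. e k n < c + \<epsilon> / 2) sequentially"
    using assms(5) \<open>0 < \<epsilon>\<close> by (intro eventually_all_finite order_tendstoD(2)) auto
  with assms(7) have "eventually (\<lambda>k. \<forall>n. t \<le> Y k n \<and> e k n < c + \<epsilon> / 2) sequentially"
    by eventually_elim auto
  then obtain K where K: "\<And>k n. K \<le> k \<Longrightarrow> t \<le> Y k n \<and> e k n < c + \<epsilon> / 2"
    unfolding eventually_sequentially by blast
  show ?thesis
  proof (intro eventually_all_finite)
    fix n
    have "eventually (\<lambda>k. (\<gamma> * t - c - \<epsilon> / 2) - \<epsilon> / 2 \<le> Y k n) sequentially"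
    proof (rule relaxation_eventually_ge[where K = K])
      fix k assume "K \<le> k"
      then have "t \<le> Min (range (Y k))" using K by (simp add: Min_ge_iff)
      then have "\<gamma> * t \<le> \<gamma> * Min (range (Y k))" using \<open>0 \<le> \<gamma>\<close> by (rule mult_left_mono)
      then have "\<gamma> * t - c - \<epsilon> / 2 \<le> \<gamma> * Min (range (Y k)) - e k n"
        using K[OF \<open>K \<le> k\<close>, of n] by linarith
      then have "\<beta> k n * (\<gamma> * t - c - \<epsilon> / 2) \<le> \<beta> k n * (\<gamma> * Min (range (Y k)) - e k n)"
        using assms(2) by (rule mult_left_mono)
      then show "(1 - \<beta> k n) * Y k n + \<beta> k n * (\<gamma> * t - c - \<epsilon> / 2) \<le> Y (Suc k) n"
        using rec[of k n] by linarith
    qed (use assms(2-4) \<open>0 < \<epsilon>\<close> in simp_all)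
    then show "eventually (\<lambda>k. \<gamma> * t - c - \<epsilon> \<le> Y k n) sequentially" by simp
  qed
qed

lemma liminf_ge_of_perturbed_min_recursion:
  fixes Y \<beta> e :: "nat \<Rightarrow> 'n::finite \<Rightarrow> real"
  assumes "\<And>k n. (1 - \<beta> k n) * Y k n + \<beta> k n * (\<gamma> * Min (range (Y k)) - e k n) \<le> Y (Suc k) n"
    and "\<And>k n. 0 \<le> \<beta> k n" and "\<And>k n. \<beta> k n \<le> 1" and "\<And>n. \<not> summable (\<lambda>k. \<beta> k n)"
    and "\<And>n. (\<lambda>k. e k n) \<longlonglongrightarrow> c" and "0 \<le> \<gamma>" and "\<gamma> < 1"
    and "\<And>k n. - B \<le> Y k n"
  shows "ereal (- c / (1 - \<gamma>)) \<le> liminf (\<lambda>k. ereal (Y k n))"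
proof (rule ereal_le_liminf_if_eventually_ge)
  define S where "S = {t. eventually (\<lambda>k. \<forall>n. t \<le> Y k n) sequentially}"
  fix t assume "t < - c / (1 - \<gamma>)"
  have "t \<in> S"
  proof (rule downward_closed_contains_below_fixed_point)
    show "- B \<in> S" using assms(8) by (simp add: S_def)
    show "t' \<in> S" if "s \<in> S" and "t' \<le> s" for s t'
      using that by (auto simp: S_def elim!: eventually_mono intro: order_trans)
    show "\<gamma> * s - c - \<epsilon> \<in> S" if "s \<in> S" and "0 < \<epsilon>" for s \<epsilon>
      using that assms(1-6) eventual_lower_bound_improves[of \<beta> Y \<gamma> e c s \<epsilon>] by (simp add: S_def)
  qed fact+
  then show "eventually (\<lambda>k. t \<le> Y k n) sequentially"
    by (auto simp: S_def elim: eventually_mono)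
qed

theorem lemma3:
  fixes M :: "'w measure"
    and y :: "nat \<Rightarrow> 'w \<Rightarrow> 'n::finite \<Rightarrow> real"
    and \<beta> :: "nat \<Rightarrow> 'w \<Rightarrow> 'n \<Rightarrow> real"
    and e :: "nat \<Rightarrow> 'w \<Rightarrow> 'n \<Rightarrow> real"
    and \<gamma> c B :: real
  assumes "prob_space M"
    and "0 < \<gamma>" and "\<gamma> < 1"
    and "c \<ge> 0" and "B \<ge> 0"
    and "AE \<omega> in M. \<forall>k n. y (Suc k) \<omega> n \<ge>
            (1 - \<beta> k \<omega> n) * y k \<omega> n
            + \<beta> k \<omega> n * (\<gamma> * Min (range (y k \<omega>)) - e k \<omega> n)"
    and "AE \<omega> in M. \<forall>k n. 0 \<le> \<beta> k \<omega> n \<and> \<beta> k \<omega> n \<le> 1"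
    and "AE \<omega> in M. \<forall>n. (\<lambda>k. \<beta> k \<omega> n) \<longlonglongrightarrow> 0"
    and "AE \<omega> in M. \<forall>n. \<not> summable (\<lambda>k. \<beta> k \<omega> n)"
    and "AE \<omega> in M. \<forall>n. (\<lambda>k. e k \<omega> n) \<longlonglongrightarrow> c"
    and "AE \<omega> in M. \<forall>k n. y k \<omega> n \<ge> - B"
  shows "AE \<omega> in M. \<forall>n.
           liminf (\<lambda>k. ereal (y k \<omega> n)) \<ge> ereal (- c / (1 - \<gamma>))"
  using assms(6,7,9,10,11)
proof eventually_elim
  case (elim \<omega>)
  show ?case
    by (intro allI liminf_ge_of_perturbed_min_recursion[where Y = "\<lambda>k. y k \<omega>" and B = B])
      (use elim assms(2,3) in auto)
qed

end
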